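(* Let $G$ be a topological group, $m\in\mathbb N\cup\{\infty\}$, $\rho\colon G\to\mathrm{Isom}(\mathbf H^m_{\mathbb C})_o$ a representation and $x\in\mathbf H^m_{\mathbb C}$. Let $\alpha(g_1,g_2,g_3)=\mathrm{Cart}(\rho(g_1)x,\rho(g_2)x,\rho(g_3)x)$. If $\rho(G)$ fixes a point $y\in\partial\mathbf H^m_{\mathbb C}$, then there exists an alternating $G$-invariant $1$-cochain $\omega\colon G^2\to\mathbb R$ such that $\partial\omega=\alpha$.
   Context: $\mathbf H^m_{\mathbb C}$ is the projectivization of the positive vectors of a separable complex Hilbert space with a strongly non-degenerate Hermitian form $B$ of signature $(1,m)$ (linear in the first variable), with $\cosh d([v],[w])=|B(v,w)|/\sqrt{B(v,v)B(w,w)}$; its boundary is the set of isotropic lines; $\mathrm{Isom}(\mathbf H^m_{\mathbb C})_o=PU(1,m)$. A representation is an orbitally continuous homomorphism. The Cartan argument is $\mathrm{Cart}(x,y,z)=\arg\big(B(\tilde x,\tilde y)B(\tilde y,\tilde z)B(\tilde z,\tilde x)\big)$ for any lifts (defined also when some points are on the boundary, using isotropic lifts). A $1$-cochain $\omega$ is alternating if $\omega(l,g)=-\omega(g,l)$ and $G$-invariant if $\omega(hg,hl)=\omega(g,l)$; $\partial\omega(g,l,k)=\omega(l,k)-\omega(g,k)+\omega(g,l)$. *)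

theory Defs
  imports "HOL-Analysis.Analysis" "HOL-Library.Extended_Nat"
begin

text \<open>Standard model of a separable complex Hilbert space of dimension m+1
  (m :: enat, infinity allowed): square-summable sequences supported on indices 0..m,
  with the Hermitian form of signature (1,m), linear in the first variable.\<close>

type_synonym cvec = "nat \<Rightarrow> complex"

definition vecs :: "enat \<Rightarrow> cvec set" where
  "vecs m = {v. (\<forall>i. enat i > m \<longrightarrow> v i = 0) \<and> summable (\<lambda>i. (cmod (v i))\<^sup>2)}"

definition l2norm :: "cvec \<Rightarrow> real" where
  "l2norm v = sqrt (\<Sum>i. (cmod (v i))\<^sup>2)"

definition cscale :: "complex \<Rightarrow> cvec \<Rightarrow> cvec" where
  "cscale c v = (\<lambda>i. c * v i)"

definition cadd :: "cvec \<Rightarrow> cvec \<Rightarrow> cvec" where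
  "cadd v w = (\<lambda>i. v i + w i)"

definition B :: "cvec \<Rightarrow> cvec \<Rightarrow> complex" where
  "B v w = v 0 * cnj (w 0) - (\<Sum>i. v (Suc i) * cnj (w (Suc i)))"

text \<open>Complex lines (points of the projectivization), represented as the set of
  nonzero multiples of a vector.\<close>

definition cline :: "cvec \<Rightarrow> cvec set" where
  "cline v = {cscale c v | c. c \<noteq> 0}"

definition hpoints :: "enat \<Rightarrow> cvec set set" where
  "hpoints m = {cline v | v. v \<in> vecs m \<and> Re (B v v) > 0}"

definition hboundary :: "enat \<Rightarrow> cvec set set" where
  "hboundary m = {cline v | v. v \<in> vecs m \<and> v \<noteq> (\<lambda>_. 0) \<and> B v v = 0}"

definition rep :: "cvec set \<Rightarrow> cvec" where
  "rep p = (SOME v. v \<in> p)"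

definition hdist :: "cvec set \<Rightarrow> cvec set \<Rightarrow> real" where
  "hdist p q = arcosh (cmod (B (rep p) (rep q)) /
                        sqrt (Re (B (rep p) (rep p)) * Re (B (rep q) (rep q))))"

definition Cart :: "cvec set \<Rightarrow> cvec set \<Rightarrow> cvec set \<Rightarrow> real" where
  "Cart p q r = Arg (B (rep p) (rep q) * B (rep q) (rep r) * B (rep r) (rep p))"

definition unitary_op :: "enat \<Rightarrow> (cvec \<Rightarrow> cvec) \<Rightarrow> bool" where
  "unitary_op m T \<longleftrightarrow>
     bij_betw T (vecs m) (vecs m) \<and>
     (\<forall>v\<in>vecs m. \<forall>w\<in>vecs m. \<forall>a b.
         T (cadd (cscale a v) (cscale b w)) = cadd (cscale a (T v)) (cscale b (T w))) \<and>
     (\<forall>v\<in>vecs m. \<forall>w\<in>vecs m. B (T v) (T w) = B v w) \<and>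
     (\<exists>K. \<forall>v\<in>vecs m. l2norm (T v) \<le> K * l2norm v)"

text \<open>PU(1,m) = Isom(H^m_C)_o, acting on projective points (lines).\<close>

definition is_PU :: "enat \<Rightarrow> (cvec set \<Rightarrow> cvec set) \<Rightarrow> bool" where
  "is_PU m f \<longleftrightarrow> (\<exists>T. unitary_op m T \<and>
      (\<forall>v\<in>vecs m. v \<noteq> (\<lambda>_. 0) \<longrightarrow> f (cline v) = T ` cline v))"

text \<open>A representation: orbitally continuous homomorphism G \<rightarrow> PU(1,m);
  the topological group G is written additively.\<close>

definition representation ::
  "enat \<Rightarrow> ('g::topological_group_add \<Rightarrow> cvec set \<Rightarrow> cvec set) \<Rightarrow> bool" where
  "representation m \<rho> \<longleftrightarrow>
     (\<forall>g. is_PU m (\<rho> g)) \<and>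
     (\<forall>g h. \<forall>v\<in>vecs m. v \<noteq> (\<lambda>_. 0) \<longrightarrow> \<rho> (g + h) (cline v) = \<rho> g (\<rho> h (cline v))) \<and>
     (\<forall>p\<in>hpoints m. \<forall>g. \<forall>\<epsilon>>0. \<exists>U. open U \<and> g \<in> U \<and>
         (\<forall>h\<in>U. hdist (\<rho> h p) (\<rho> g p) < \<epsilon>))"

definition alternating :: "('g \<Rightarrow> 'g \<Rightarrow> real) \<Rightarrow> bool" where
  "alternating \<omega> \<longleftrightarrow> (\<forall>g l. \<omega> l g = - \<omega> g l)"

definition G_invariant :: "('g::group_add \<Rightarrow> 'g \<Rightarrow> real) \<Rightarrow> bool" where
  "G_invariant \<omega> \<longleftrightarrow> (\<forall>h g l. \<omega> (h + g) (h + l) = \<omega> g l)"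

definition coboundary1 :: "('g \<Rightarrow> 'g \<Rightarrow> real) \<Rightarrow> 'g \<Rightarrow> 'g \<Rightarrow> 'g \<Rightarrow> real" where
  "coboundary1 \<omega> g l k = \<omega> l k - \<omega> g k + \<omega> g l"

end

theory Submission
  imports Defs
begin

text \<open>
  Put \<open>\<omega>(g, l) = Cart(\<rho> g x, \<rho> l x, y)\<close> for the fixed boundary point \<open>y\<close>. Since \<open>\<rho>(G)\<close>
  fixes \<open>y\<close> and isometries preserve the Cartan argument, \<open>\<omega>\<close> is \<open>G\<close>-invariant; it is
  alternating because swapping two points conjugates the Hermitian triple product
  \<open>B(a,b) B(b,c) B(c,a)\<close>. For lifts \<open>a, b, c\<close> of three points of the orbit and a lift \<open>Y\<close>
  of \<open>y\<close>, the product of the triple products of \<open>(b,c,Y)\<close>, \<open>(c,a,Y)\<close> and \<open>(a,b,Y)\<close>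
  is a positive multiple of that of \<open>(a,b,c)\<close>. All four have positive real part, so their
  arguments add without wrapping around, which is the identity \<open>\<partial>\<omega> = \<alpha>\<close>.
  Positivity of the real part of the triple product of two timelike vectors and a nonzero
  non-spacelike one comes from the Cauchy-Schwarz inequality on the orthogonal complement of a
  timelike vector, on which \<open>B\<close> is negative definite.
\<close>

section \<open>The Hermitian form\<close>

lemma vecs_summable: "v \<in> vecs m \<Longrightarrow> summable (\<lambda>i. (cmod (v i))\<^sup>2)"
  by (simp add: vecs_def)

lemma vecs_summable_Suc: "v \<in> vecs m \<Longrightarrow> summable (\<lambda>i. (cmod (v (Suc i)))\<^sup>2)"
  using summable_ignore_initial_segment[OF vecs_summable, of v m 1] by simp

lemma vecs_cadd:
  assumes "v \<in> vecs m" "w \<in> vecs m"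
  shows "cadd v w \<in> vecs m"
proof -
  have bound: "(cmod (v i + w i))\<^sup>2 \<le> 2 * (cmod (v i))\<^sup>2 + 2 * (cmod (w i))\<^sup>2" for i
  proof -
    have "(cmod (v i + w i))\<^sup>2 \<le> (cmod (v i) + cmod (w i))\<^sup>2"
      by (simp add: norm_triangle_ineq power_mono)
    also have "\<dots> \<le> 2 * (cmod (v i))\<^sup>2 + 2 * (cmod (w i))\<^sup>2"
      using sum_squares_bound[of "cmod (v i)" "cmod (w i)"] by (simp add: power2_sum)
    finally show ?thesis .
  qed
  have "summable (\<lambda>i. 2 * (cmod (v i))\<^sup>2 + 2 * (cmod (w i))\<^sup>2)"
    using assms by (intro summable_add summable_mult vecs_summable)
  then have "summable (\<lambda>i. (cmod (v i + w i))\<^sup>2)"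
    by (rule summable_comparison_test') (simp add: bound)
  with assms show ?thesis
    by (simp add: vecs_def cadd_def)
qed

lemma vecs_cscale:
  assumes "v \<in> vecs m"
  shows "cscale c v \<in> vecs m"
proof -
  have "summable (\<lambda>i. (cmod c)\<^sup>2 * (cmod (v i))\<^sup>2)"
    using assms by (intro summable_mult vecs_summable)
  with assms show ?thesis
    by (simp add: vecs_def cscale_def norm_mult power_mult_distrib)
qed

lemma vecs_lincomb:
  "v \<in> vecs m \<Longrightarrow> w \<in> vecs m \<Longrightarrow> cadd (cscale a v) (cscale b w) \<in> vecs m"
  by (simp add: vecs_cadd vecs_cscale)

definition spatial_form :: "cvec \<Rightarrow> cvec \<Rightarrow> complex" where
  "spatial_form v w = (\<Sum>i. v (Suc i) * cnj (w (Suc i)))"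

lemma B_eq_spatial_form: "B v w = v 0 * cnj (w 0) - spatial_form v w"
  by (simp add: B_def spatial_form_def)

lemma spatial_form_sums:
  assumes "v \<in> vecs m" "w \<in> vecs m"
  shows "(\<lambda>i. v (Suc i) * cnj (w (Suc i))) sums spatial_form v w"
proof -
  have bound: "norm (v (Suc i) * cnj (w (Suc i))) \<le> (cmod (v (Suc i)))\<^sup>2 + (cmod (w (Suc i)))\<^sup>2" for i
    unfolding norm_mult complex_mod_cnj
    using sum_squares_bound[of "cmod (v (Suc i))" "cmod (w (Suc i))"]
      mult_nonneg_nonneg[OF norm_ge_zero norm_ge_zero, of "v (Suc i)" "w (Suc i)"]
    by linarith
  have "summable (\<lambda>i. (cmod (v (Suc i)))\<^sup>2 + (cmod (w (Suc i)))\<^sup>2)"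
    using assms by (intro summable_add vecs_summable_Suc)
  then have "summable (\<lambda>i. v (Suc i) * cnj (w (Suc i)))"
    by (rule summable_comparison_test') (rule bound)
  then show ?thesis
    unfolding spatial_form_def by (rule summable_sums)
qed

lemma spatial_form_lincomb_left:
  assumes "v \<in> vecs m" "w \<in> vecs m" "u \<in> vecs m"
  shows "spatial_form (cadd (cscale a v) (cscale b w)) u = a * spatial_form v u + b * spatial_form w u"
proof -
  have "(\<lambda>i. a * (v (Suc i) * cnj (u (Suc i))) + b * (w (Suc i) * cnj (u (Suc i))))
          sums (a * spatial_form v u + b * spatial_form w u)"
    using assms by (intro sums_add sums_mult spatial_form_sums)
  then show ?thesis
    unfolding spatial_form_def cadd_def cscale_def
    by (simp add: sums_iff algebra_simps)
qed

lemma spatial_form_commute: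
  assumes "v \<in> vecs m" "w \<in> vecs m"
  shows "spatial_form w v = cnj (spatial_form v w)"
proof -
  have "(\<lambda>i. cnj (v (Suc i) * cnj (w (Suc i)))) sums cnj (spatial_form v w)"
    using assms by (simp only: sums_cnj spatial_form_sums)
  then show ?thesis
    unfolding spatial_form_def by (simp add: sums_iff mult.commute)
qed

lemma spatial_form_self:
  assumes "v \<in> vecs m"
  shows "spatial_form v v = of_real (\<Sum>i. (cmod (v (Suc i)))\<^sup>2)"
proof -
  have "(\<lambda>i. (cmod (v (Suc i)))\<^sup>2) sums (\<Sum>i. (cmod (v (Suc i)))\<^sup>2)"
    using vecs_summable_Suc[OF assms] by (rule summable_sums)
  then have "(\<lambda>i. v (Suc i) * cnj (v (Suc i))) sums of_real (\<Sum>i. (cmod (v (Suc i)))\<^sup>2)"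
    unfolding complex_norm_square[symmetric] by (rule sums_of_real)
  then show ?thesis
    using spatial_form_sums[OF assms assms] sums_unique2 by blast
qed

lemma B_lincomb_left:
  assumes "v \<in> vecs m" "w \<in> vecs m" "u \<in> vecs m"
  shows "B (cadd (cscale a v) (cscale b w)) u = a * B v u + b * B w u"
  using spatial_form_lincomb_left[OF assms]
  by (simp add: B_eq_spatial_form cadd_def cscale_def algebra_simps)

lemma B_commute:
  assumes "v \<in> vecs m" "w \<in> vecs m"
  shows "B w v = cnj (B v w)"
  using spatial_form_commute[OF assms] by (simp add: B_eq_spatial_form mult.commute)

lemma B_lincomb_right:
  assumes "v \<in> vecs m" "w \<in> vecs m" "u \<in> vecs m"
  shows "B u (cadd (cscale a v) (cscale b w)) = cnj a * B u v + cnj b * B u w"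
proof -
  have "B u (cadd (cscale a v) (cscale b w)) = cnj (B (cadd (cscale a v) (cscale b w)) u)"
    using B_commute[OF vecs_lincomb[OF assms(1,2)] assms(3)] .
  also have "\<dots> = cnj (a * B v u + b * B w u)"
    using B_lincomb_left[OF assms] by simp
  also have "\<dots> = cnj a * B u v + cnj b * B u w"
    using B_commute[OF assms(1,3)] B_commute[OF assms(2,3)] by simp
  finally show ?thesis .
qed

lemma cadd_cscale_zero: "cadd (cscale a v) (cscale 0 w) = cscale a v"
  by (simp add: cadd_def cscale_def)

lemma B_cscale:
  assumes "v \<in> vecs m" "w \<in> vecs m"
  shows "B (cscale c v) (cscale d w) = c * cnj d * B v w"
  using B_lincomb_left[OF assms(1,1) vecs_cscale[OF assms(2)], of c 0]
    B_lincomb_right[OF assms(2,2,1), of d 0]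
  by (simp add: cadd_cscale_zero)

lemma B_self:
  "v \<in> vecs m \<Longrightarrow> B v v = of_real ((cmod (v 0))\<^sup>2 - (\<Sum>i. (cmod (v (Suc i)))\<^sup>2))"
  unfolding B_eq_spatial_form complex_norm_square[symmetric] by (simp add: spatial_form_self)

lemma B_self_real: "v \<in> vecs m \<Longrightarrow> B v v = of_real (Re (B v v))"
  by (simp add: B_self)

lemma B_self_nonpos_if_first_zero:
  assumes "v \<in> vecs m" "v 0 = 0"
  shows "Re (B v v) \<le> 0"
  using assms vecs_summable_Suc[OF assms(1)] by (simp add: B_self suminf_nonneg)

lemma B_self_neg_if_first_zero:
  assumes "v \<in> vecs m" "v 0 = 0" "v \<noteq> (\<lambda>_. 0)"
  shows "Re (B v v) < 0"
proof -
  obtain i where "v i \<noteq> 0"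
    using assms(3) by auto
  with assms(2) obtain j where "v (Suc j) \<noteq> 0"
    by (cases i) auto
  then have "0 < (\<Sum>i. (cmod (v (Suc i)))\<^sup>2)"
    by (subst suminf_pos_iff[OF vecs_summable_Suc[OF assms(1)]]) auto
  with assms show ?thesis
    by (simp add: B_self)
qed

lemma timelike_nonzero: "Re (B v v) > 0 \<Longrightarrow> v \<noteq> (\<lambda>_. 0)"
  by (auto simp: B_def)

lemma Re_B_self_lincomb:
  fixes a b :: complex
  assumes v: "v \<in> vecs m" and w: "w \<in> vecs m"
  shows "Re (B (cadd (cscale a v) (cscale b w)) (cadd (cscale a v) (cscale b w)))
    = (cmod a)\<^sup>2 * Re (B v v) + (cmod b)\<^sup>2 * Re (B w w) + 2 * Re (a * cnj b * B v w)"
proof -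
  have "B (cadd (cscale a v) (cscale b w)) (cadd (cscale a v) (cscale b w))
      = a * (cnj a * B v v + cnj b * B v w) + b * (cnj a * B w v + cnj b * B w w)"
    using B_lincomb_left[OF v w vecs_lincomb[OF v w]] B_lincomb_right[OF v w v] B_lincomb_right[OF v w w]
    by simp
  also have "\<dots> = (a * cnj a) * B v v + (b * cnj b) * B w w
      + (a * cnj b * B v w + cnj (a * cnj b * B v w))"
    using B_commute[OF v w] by (simp add: algebra_simps)
  finally show ?thesis
    unfolding complex_norm_square[symmetric] by (simp add: algebra_simps)
qed

section \<open>The orthogonal complement of a timelike vector\<close>

lemma B_self_nonpos_if_orthogonal_timelike:
  assumes v: "v \<in> vecs m" "Re (B v v) > 0" and w: "w \<in> vecs m" "B w v = 0"
  shows "Re (B w w) \<le> 0" and "w \<noteq> (\<lambda>_. 0) \<Longrightarrow> Re (B w w) < 0"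
proof -
  have "v 0 \<noteq> 0"
    using B_self_nonpos_if_first_zero[OF v(1)] v(2) by fastforce
  then have v0: "(cmod (v 0))\<^sup>2 > 0"
    by simp
  \<comment> \<open>u has vanishing time coordinate, so \<open>B u u \<le> 0\<close>.\<close>
  define u where "u = cadd (cscale (v 0) w) (cscale (- w 0) v)"
  have "u 0 = 0"
    by (simp add: u_def cadd_def cscale_def mult.commute)
  moreover have "Re (B u u) = (cmod (v 0))\<^sup>2 * Re (B w w) + (cmod (w 0))\<^sup>2 * Re (B v v)"
    unfolding u_def using Re_B_self_lincomb[OF w(1) v(1)] w(2) by simp
  ultimately have key: "(cmod (v 0))\<^sup>2 * Re (B w w) + (cmod (w 0))\<^sup>2 * Re (B v v) \<le> 0"
    using B_self_nonpos_if_first_zero[OF vecs_lincomb[OF w(1) v(1)]] u_def by metis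
  have "(cmod (w 0))\<^sup>2 * Re (B v v) \<ge> 0"
    using v(2) by simp
  with key have "(cmod (v 0))\<^sup>2 * Re (B w w) \<le> 0"
    by linarith
  with v0 show "Re (B w w) \<le> 0"
    by (auto simp: mult_le_0_iff)
  assume "w \<noteq> (\<lambda>_. 0)"
  show "Re (B w w) < 0"
  proof (cases "w 0 = 0")
    case True
    then show ?thesis
      using B_self_neg_if_first_zero[OF w(1)] \<open>w \<noteq> (\<lambda>_. 0)\<close> by blast
  next
    case False
    then have "(cmod (w 0))\<^sup>2 * Re (B v v) > 0"
      using v(2) by simp
    with key have "(cmod (v 0))\<^sup>2 * Re (B w w) < 0"
      by linarith
    with v0 show ?thesis
      by (auto simp: mult_less_0_iff)
  qed
qed

lemma B_nonzero_if_timelike_causal: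
  assumes "v \<in> vecs m" "Re (B v v) > 0" "w \<in> vecs m" "Re (B w w) \<ge> 0" "w \<noteq> (\<lambda>_. 0)"
  shows "B w v \<noteq> 0"
  using B_self_nonpos_if_orthogonal_timelike(2)[OF assms(1-3)] assms(4,5) by fastforce

lemma cauchy_schwarz_from_quadratic:
  fixes p r :: real and q :: complex
  assumes r: "0 \<le> r" and quad: "\<And>t. 0 \<le> p + 2 * Re (cnj t * q) + (cmod t)\<^sup>2 * r"
  shows "(cmod q)\<^sup>2 \<le> p * r"
proof (cases "r = 0")
  case True
  have "q = 0"
  proof (rule ccontr)
    assume "q \<noteq> 0"
    define s where "s = (\<bar>p\<bar> + 1) / (cmod q)\<^sup>2"
    have "0 \<le> p + 2 * Re (cnj (- of_real s * q) * q)"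
      using quad[of "- of_real s * q"] True by simp
    also have "Re (cnj (- of_real s * q) * q) = - (s * (cmod q)\<^sup>2)"
      unfolding cmod_power2 by (simp add: power2_eq_square algebra_simps)
    also have "s * (cmod q)\<^sup>2 = \<bar>p\<bar> + 1"
      using \<open>q \<noteq> 0\<close> by (simp add: s_def)
    finally show False
      by simp
  qed
  then show ?thesis
    using True by simp
next
  case False
  then have "r > 0"
    using r by simp
  define t where "t = - q / of_real r"
  have "Re (cnj t * q) = - ((cmod q)\<^sup>2 / r)"
    unfolding t_def cmod_power2 by (simp add: power2_eq_square Re_divide_of_real add_divide_distrib)
  moreover have "(cmod t)\<^sup>2 * r = (cmod q)\<^sup>2 / r"
    unfolding t_def using \<open>r > 0\<close> by (simp add: norm_divide power_divide power2_eq_square)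
  ultimately have "0 \<le> p - (cmod q)\<^sup>2 / r"
    using quad[of t] by simp
  then show ?thesis
    using \<open>r > 0\<close> by (simp add: field_simps)
qed

lemma cauchy_schwarz_orthogonal_timelike:
  assumes v: "v \<in> vecs m" "Re (B v v) > 0"
    and w1: "w1 \<in> vecs m" "B w1 v = 0" and w2: "w2 \<in> vecs m" "B w2 v = 0"
  shows "(cmod (B w1 w2))\<^sup>2 \<le> Re (B w1 w1) * Re (B w2 w2)"
proof -
  have "(cmod (- B w1 w2))\<^sup>2 \<le> (- Re (B w1 w1)) * (- Re (B w2 w2))"
  proof (rule cauchy_schwarz_from_quadratic)
    show "0 \<le> - Re (B w2 w2)"
      using B_self_nonpos_if_orthogonal_timelike(1)[OF v w2] by simp
    fix t
    have "B (cadd (cscale 1 w1) (cscale t w2)) v = 0"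
      using B_lincomb_left[OF w1(1) w2(1) v(1)] w1(2) w2(2) by simp
    then have "Re (B (cadd (cscale 1 w1) (cscale t w2)) (cadd (cscale 1 w1) (cscale t w2))) \<le> 0"
      using B_self_nonpos_if_orthogonal_timelike(1)[OF v vecs_lincomb[OF w1(1) w2(1)]] by blast
    then show "0 \<le> - Re (B w1 w1) + 2 * Re (cnj t * - B w1 w2) + (cmod t)\<^sup>2 * - Re (B w2 w2)"
      unfolding Re_B_self_lincomb[OF w1(1) w2(1)] by simp
  qed
  then show ?thesis
    by simp
qed

definition orth_proj :: "cvec \<Rightarrow> cvec \<Rightarrow> cvec" where
  "orth_proj v w = cadd (cscale 1 w) (cscale (- (B w v / B v v)) v)"

lemma orth_proj_vecs: "v \<in> vecs m \<Longrightarrow> w \<in> vecs m \<Longrightarrow> orth_proj v w \<in> vecs m"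
  unfolding orth_proj_def by (rule vecs_lincomb)

lemma B_orth_proj_left:
  assumes "v \<in> vecs m" "w \<in> vecs m" "B v v \<noteq> 0"
  shows "B (orth_proj v w) v = 0"
  unfolding orth_proj_def using B_lincomb_left[OF assms(2,1,1)] assms(3) by simp

lemma B_orth_proj:
  assumes v: "v \<in> vecs m" "B v v \<noteq> 0" and w: "w \<in> vecs m" and u: "u \<in> vecs m"
  shows "B (orth_proj v w) (orth_proj v u) = B w u - B w v * B v u / B v v"
proof -
  have orth: "B v (orth_proj v u) = 0"
    using B_commute[OF orth_proj_vecs[OF v(1) u] v(1)] B_orth_proj_left[OF v(1) u v(2)] by simp
  have "cnj (B v v) = B v v"
    using B_self_real[OF v(1)] by (metis complex_cnj_complex_of_real)
  then have coeff: "cnj (B u v / B v v) = B v u / B v v"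
    by (simp add: B_commute[OF u v(1)])
  have "B (orth_proj v w) (orth_proj v u) = B w (orth_proj v u)"
    using B_lincomb_left[OF w v(1) orth_proj_vecs[OF v(1) u]] orth by (simp add: orth_proj_def)
  also have "\<dots> = B w u - cnj (B u v / B v v) * B w v"
    using B_lincomb_right[OF u v(1) w] by (simp add: orth_proj_def)
  also have "\<dots> = B w u - B v u / B v v * B w v"
    by (simp only: coeff)
  finally show ?thesis
    by (simp add: ac_simps)
qed

lemma Re_cnj_mult_self: "Re (cnj z * z) = (cmod z)\<^sup>2"
  unfolding cmod_power2 by (simp add: power2_eq_square)

lemma Re_B_orth_proj_self:
  assumes v: "v \<in> vecs m" "B v v \<noteq> 0" and w: "w \<in> vecs m"
  shows "Re (B (orth_proj v w) (orth_proj v w)) = Re (B w w) - (cmod (B v w))\<^sup>2 / Re (B v v)"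
proof -
  obtain r where r: "B v v = of_real r"
    using B_self_real[OF v(1)] by blast
  have "B (orth_proj v w) (orth_proj v w) = B w w - cnj (B v w) * B v w / of_real r"
    using B_orth_proj[OF v w w] B_commute[OF v(1) w] r by simp
  then show ?thesis
    by (simp only: r minus_complex.sel Re_complex_of_real Re_divide_of_real Re_cnj_mult_self)
qed

section \<open>The Hermitian triple product\<close>

text \<open>
  Here \<open>x, y, z\<close> stand for \<open>B(v\<^sub>1,v\<^sub>2), B(v\<^sub>1,v\<^sub>3), B(v\<^sub>2,v\<^sub>3)\<close> and \<open>a, c, e\<close> for the
  norms of \<open>v\<^sub>1, v\<^sub>2, v\<^sub>3\<close>; the hypotheses are the Cauchy-Schwarz inequality for the
  projections of \<open>v\<^sub>2, v\<^sub>3\<close> orthogonal to \<open>v\<^sub>1\<close>.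
\<close>

lemma Re_mult_cnj_pos_if_schur_bound:
  fixes a c e :: real and x y z :: complex
  assumes a: "a > 0" and c: "c > 0" and e: "e \<ge> 0" and y: "y \<noteq> 0"
    and x: "c - (cmod x)\<^sup>2 / a \<le> 0"
    and bound: "(cmod (z - cnj x * y / of_real a))\<^sup>2 \<le> (c - (cmod x)\<^sup>2 / a) * (e - (cmod y)\<^sup>2 / a)"
  shows "Re (x * z * cnj y) > 0"
proof -
  define R where "R = Re (x * z * cnj y)"
  have "(cmod (z - cnj x * y / of_real a))\<^sup>2 = (cmod z)\<^sup>2 - 2 * R / a + (cmod x)\<^sup>2 * (cmod y)\<^sup>2 / a\<^sup>2"
    unfolding R_def cmod_power2 using a
    by (simp add: Re_divide_of_real Im_divide_of_real field_simps power2_eq_square)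
  with bound a have "2 * R / a \<ge> (cmod z)\<^sup>2 + c * (cmod y)\<^sup>2 / a + e * (cmod x)\<^sup>2 / a - c * e"
    by (simp add: algebra_simps power2_eq_square)
  moreover have "e * (cmod x)\<^sup>2 / a \<ge> c * e"
  proof -
    have "a * c \<le> (cmod x)\<^sup>2"
      using x a by (simp add: field_simps)
    then have "e * (a * c) \<le> e * (cmod x)\<^sup>2"
      using e by (rule mult_left_mono)
    then show ?thesis
      using a by (simp add: field_simps)
  qed
  moreover have "c * (cmod y)\<^sup>2 / a > 0"
    using a c y by simp
  ultimately have "2 * R / a > 0"
    using zero_le_power2[of "cmod z"] by linarith
  then show ?thesis
    using a by (simp add: R_def zero_less_divide_iff)
qed

definition herm_triple :: "cvec \<Rightarrow> cvec \<Rightarrow> cvec \<Rightarrow> complex" where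
  "herm_triple u v w = B u v * B v w * B w u"

lemma Re_herm_triple_pos:
  assumes v1: "v1 \<in> vecs m" "Re (B v1 v1) > 0" and v2: "v2 \<in> vecs m" "Re (B v2 v2) > 0"
    and v3: "v3 \<in> vecs m" "Re (B v3 v3) \<ge> 0" "v3 \<noteq> (\<lambda>_. 0)"
  shows "Re (herm_triple v1 v2 v3) > 0"
proof -
  define a where "a = Re (B v1 v1)"
  define x y z where "x = B v1 v2" and "y = B v1 v3" and "z = B v2 v3"
  have B11: "B v1 v1 = of_real a" and "B v1 v1 \<noteq> 0"
    using B_self_real[OF v1(1)] v1(2) by (auto simp: a_def)
  have B21: "B v2 v1 = cnj x" and B31: "B v3 v1 = cnj y"
    using B_commute[OF v1(1) v2(1)] B_commute[OF v1(1) v3(1)] by (simp_all add: x_def y_def)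
  define w2 w3 where "w2 = orth_proj v1 v2" and "w3 = orth_proj v1 v3"
  have w: "w2 \<in> vecs m" "B w2 v1 = 0" "w3 \<in> vecs m" "B w3 v1 = 0"
    unfolding w2_def w3_def using v1(1) v2(1) v3(1) \<open>B v1 v1 \<noteq> 0\<close>
    by (simp_all add: orth_proj_vecs B_orth_proj_left)
  have "Re (B w2 w2) = Re (B v2 v2) - (cmod x)\<^sup>2 / a"
    unfolding w2_def x_def a_def by (rule Re_B_orth_proj_self[OF v1(1) \<open>B v1 v1 \<noteq> 0\<close> v2(1)])
  moreover have "Re (B w3 w3) = Re (B v3 v3) - (cmod y)\<^sup>2 / a"
    unfolding w3_def y_def a_def by (rule Re_B_orth_proj_self[OF v1(1) \<open>B v1 v1 \<noteq> 0\<close> v3(1)])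
  moreover have "B w2 w3 = z - cnj x * y / of_real a"
    using B_orth_proj[OF v1(1) \<open>B v1 v1 \<noteq> 0\<close> v2(1) v3(1)]
    by (simp add: w2_def w3_def B21 B11 x_def y_def z_def)
  moreover have "y \<noteq> 0"
    using B_nonzero_if_timelike_causal[OF v1 v3] B31 by auto
  ultimately have "Re (x * z * cnj y) > 0"
    using Re_mult_cnj_pos_if_schur_bound[of a "Re (B v2 v2)" "Re (B v3 v3)" y x z]
      B_self_nonpos_if_orthogonal_timelike(1)[OF v1 w(1,2)]
      cauchy_schwarz_orthogonal_timelike[OF v1 w] v1(2) v2(2) v3(2)
    by (simp add: a_def)
  then show ?thesis
    by (simp add: herm_triple_def B31 x_def z_def)
qed

lemma herm_triple_swap:
  assumes "u \<in> vecs m" "v \<in> vecs m" "w \<in> vecs m"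
  shows "herm_triple v u w = cnj (herm_triple u v w)"
  unfolding herm_triple_def
  using B_commute[OF assms(1,2)] B_commute[OF assms(2,3)] B_commute[OF assms(3,1)]
  by (simp add: mult_ac)

lemma herm_triple_cocycle_identity:
  assumes "u \<in> vecs m" "v \<in> vecs m" "w \<in> vecs m" "y \<in> vecs m"
  shows "herm_triple v w y * cnj (herm_triple u w y) * herm_triple u v y
    = of_real ((cmod (B y u))\<^sup>2 * (cmod (B y v))\<^sup>2 * (cmod (B y w))\<^sup>2) * herm_triple u v w"
proof -
  have "of_real ((cmod (B y u))\<^sup>2 * (cmod (B y v))\<^sup>2 * (cmod (B y w))\<^sup>2)
      = (B y u * cnj (B y u)) * (B y v * cnj (B y v)) * (B y w * cnj (B y w))"
    by (simp only: of_real_mult complex_norm_square)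
  then show ?thesis
    unfolding herm_triple_def
    using B_commute[OF assms(4,1)] B_commute[OF assms(4,2)] B_commute[OF assms(4,3)]
      B_commute[OF assms(1,3)]
    by (simp add: mult_ac)
qed

lemma Arg_cnj_if_Re_pos: "Re z > 0 \<Longrightarrow> Arg (cnj z) = - Arg z"
  by (simp add: Arg_cnj Arg_real)

lemma Arg_mult_if_Re_pos:
  assumes "Re z > 0" "Re (z * w) > 0"
  shows "Arg (z * w) = Arg z + Arg w"
proof -
  have "z \<noteq> 0" "w \<noteq> 0"
    using assms by auto
  have "\<bar>Arg z\<bar> < pi / 2" "\<bar>Arg (z * w)\<bar> < pi / 2"
    using assms Arg_Re_pos by blast+
  moreover have "- pi < Arg w" "Arg w \<le> pi"
    by (rule mpi_less_Arg, rule Arg_le_pi)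
  ultimately show ?thesis
    using Arg_times'[OF \<open>z \<noteq> 0\<close> \<open>w \<noteq> 0\<close>] by (auto split: if_splits)
qed

lemma Arg_mult3_if_Re_pos:
  assumes "Re z1 > 0" "Re z2 > 0" "Re z3 > 0" "Re (z1 * z2 * z3) > 0"
  shows "Arg (z1 * z2 * z3) = Arg z1 + Arg z2 + Arg z3"
proof -
  have "\<bar>Arg z1\<bar> < pi / 2" "\<bar>Arg z2\<bar> < pi / 2"
    using assms Arg_Re_pos by blast+
  then have "Arg (z1 * z2) = Arg z1 + Arg z2"
    using assms(1,2) by (intro Arg_times) auto
  moreover have "Arg (z3 * (z1 * z2)) = Arg z3 + Arg (z1 * z2)"
    using assms(3,4) by (intro Arg_mult_if_Re_pos) (simp_all add: mult_ac)
  ultimately show ?thesis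
    by (simp add: mult_ac)
qed

section \<open>Points, isometries and the Cartan argument\<close>

lemma rep_cline: "\<exists>c. c \<noteq> 0 \<and> rep (cline v) = cscale c v"
proof -
  have "v \<in> cline v"
    unfolding cline_def by (rule CollectI, rule exI[of _ 1]) (simp add: cscale_def)
  then have "rep (cline v) \<in> cline v"
    unfolding rep_def by (rule someI[of "\<lambda>w. w \<in> cline v"])
  then show ?thesis
    unfolding cline_def by blast
qed

lemma B_self_rep_cline:
  assumes "v \<in> vecs m"
  obtains r where "r > 0" "rep (cline v) \<in> vecs m" "B (rep (cline v)) (rep (cline v)) = of_real r * B v v"
proof -
  obtain c where "c \<noteq> 0" "rep (cline v) = cscale c v"
    using rep_cline by blast
  with assms show ?thesis
    using that[of "(cmod c)\<^sup>2"] by (simp add: vecs_cscale B_cscale complex_norm_square[symmetric])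
qed

lemma hpoints_rep:
  assumes "p \<in> hpoints m"
  shows "rep p \<in> vecs m" "Re (B (rep p) (rep p)) > 0"
proof -
  obtain v where v: "v \<in> vecs m" "Re (B v v) > 0" "p = cline v"
    using assms unfolding hpoints_def by blast
  then obtain r where "r > 0" "rep p \<in> vecs m" "B (rep p) (rep p) = of_real r * B v v"
    using B_self_rep_cline by metis
  with v(2) show "rep p \<in> vecs m" "Re (B (rep p) (rep p)) > 0"
    by simp_all
qed

lemma hboundary_rep:
  assumes "p \<in> hboundary m"
  shows "rep p \<in> vecs m" "B (rep p) (rep p) = 0" "rep p \<noteq> (\<lambda>_. 0)"
proof -
  obtain v c where v: "p = cline v" "v \<in> vecs m" "v \<noteq> (\<lambda>_. 0)" "B v v = 0"
    and c: "c \<noteq> 0" "rep (cline v) = cscale c v"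
    using assms rep_cline unfolding hboundary_def by blast
  then show "rep p \<in> vecs m" "B (rep p) (rep p) = 0"
    by (simp_all add: vecs_cscale B_cscale)
  show "rep p \<noteq> (\<lambda>_. 0)"
    using v(1,3) c by (auto simp: cscale_def fun_eq_iff)
qed

lemma hpoints_Un_hboundary_rep:
  assumes "p \<in> hpoints m \<union> hboundary m"
  shows "rep p \<in> vecs m" "Re (B (rep p) (rep p)) \<ge> 0" "rep p \<noteq> (\<lambda>_. 0)"
  using assms hpoints_rep[of p m] hboundary_rep[of p m] timelike_nonzero by fastforce+

lemma Cart_eq_Arg_herm_triple: "Cart p q r = Arg (herm_triple (rep p) (rep q) (rep r))"
  by (simp add: Cart_def herm_triple_def)

lemma Cart_swap:
  assumes "p \<in> hpoints m" "q \<in> hpoints m" "y \<in> hpoints m \<union> hboundary m"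
  shows "Cart q p y = - Cart p q y"
proof -
  note a = hpoints_rep[OF assms(1)] and b = hpoints_rep[OF assms(2)]
    and y = hpoints_Un_hboundary_rep[OF assms(3)]
  have "herm_triple (rep q) (rep p) (rep y) = cnj (herm_triple (rep p) (rep q) (rep y))"
    using a(1) b(1) y(1) by (rule herm_triple_swap)
  then show ?thesis
    unfolding Cart_eq_Arg_herm_triple using Arg_cnj_if_Re_pos Re_herm_triple_pos[OF a b y] by simp
qed

lemma Cart_cocycle:
  assumes "p \<in> hpoints m" "q \<in> hpoints m" "r \<in> hpoints m" "y \<in> hpoints m \<union> hboundary m"
  shows "Cart q r y - Cart p r y + Cart p q y = Cart p q r"
proof -
  note a = hpoints_rep[OF assms(1)] and b = hpoints_rep[OF assms(2)] and c = hpoints_rep[OF assms(3)]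
    and y = hpoints_Un_hboundary_rep[OF assms(4)]
  define X1 X2 X3 where "X1 = herm_triple (rep q) (rep r) (rep y)"
    and "X2 = herm_triple (rep p) (rep r) (rep y)" and "X3 = herm_triple (rep p) (rep q) (rep y)"
  define T where "T = herm_triple (rep p) (rep q) (rep r)"
  have pos: "Re X1 > 0" "Re (cnj X2) > 0" "Re X3 > 0" "Re T > 0"
    unfolding X1_def X2_def X3_def T_def
    using Re_herm_triple_pos[OF b c y] Re_herm_triple_pos[OF a c y] Re_herm_triple_pos[OF a b y]
      Re_herm_triple_pos[OF a b c(1) less_imp_le[OF c(2)] timelike_nonzero[OF c(2)]]
    by simp_all
  define s where "s = (cmod (B (rep y) (rep p)))\<^sup>2 * (cmod (B (rep y) (rep q)))\<^sup>2 * (cmod (B (rep y) (rep r)))\<^sup>2"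
  have "s > 0"
    unfolding s_def using B_nonzero_if_timelike_causal y a b c by simp
  have prod: "X1 * cnj X2 * X3 = of_real s * T"
    unfolding X1_def X2_def X3_def T_def s_def
    by (rule herm_triple_cocycle_identity[OF a(1) b(1) c(1) y(1)])
  have "Arg T = Arg (X1 * cnj X2 * X3)"
    using \<open>s > 0\<close> by (simp add: prod)
  also have "\<dots> = Arg X1 + Arg (cnj X2) + Arg X3"
    using pos \<open>s > 0\<close> by (intro Arg_mult3_if_Re_pos) (simp_all add: prod)
  also have "Arg (cnj X2) = - Arg X2"
    using pos(2) by (simp add: Arg_cnj_if_Re_pos)
  finally show ?thesis
    unfolding Cart_eq_Arg_herm_triple X1_def X2_def X3_def T_def by simp
qed

lemma unitary_op_image_cline:
  assumes "unitary_op m T" "v \<in> vecs m"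
  shows "T ` cline v = cline (T v)"
proof -
  have scale: "T (cscale c v) = cscale c (T v)" for c
    using assms cadd_cscale_zero[of c v v] cadd_cscale_zero[of c "T v" "T v"]
    unfolding unitary_op_def by metis
  have "T ` cline v = {T (cscale c v) | c. c \<noteq> 0}"
    unfolding cline_def by auto
  then show ?thesis
    unfolding cline_def scale .
qed

lemma is_PU_cline:
  assumes "is_PU m f"
  obtains T where "\<And>v. v \<in> vecs m \<Longrightarrow> T v \<in> vecs m"
    "\<And>v w. v \<in> vecs m \<Longrightarrow> w \<in> vecs m \<Longrightarrow> B (T v) (T w) = B v w"
    "\<And>v. v \<in> vecs m \<Longrightarrow> v \<noteq> (\<lambda>_. 0) \<Longrightarrow> f (cline v) = cline (T v)"
proof -
  obtain T where T: "unitary_op m T" "\<And>v. v \<in> vecs m \<Longrightarrow> v \<noteq> (\<lambda>_. 0) \<Longrightarrow> f (cline v) = T ` cline v"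
    using assms unfolding is_PU_def by blast
  then show ?thesis
    using that[of T] unitary_op_image_cline[OF T(1)] bij_betwE
    unfolding unitary_op_def by metis
qed

lemma hpoints_Un_hboundary_cline:
  assumes "p \<in> hpoints m \<union> hboundary m"
  obtains v where "v \<in> vecs m" "v \<noteq> (\<lambda>_. 0)" "p = cline v"
  using assms timelike_nonzero unfolding hpoints_def hboundary_def by blast

lemma Cart_cline:
  assumes "u \<in> vecs m" "v \<in> vecs m" "w \<in> vecs m"
  shows "Cart (cline u) (cline v) (cline w) = Arg (herm_triple u v w)"
proof -
  obtain a b c where "a \<noteq> 0" "b \<noteq> 0" "c \<noteq> 0"
    and reps: "rep (cline u) = cscale a u" "rep (cline v) = cscale b v" "rep (cline w) = cscale c w"
    using rep_cline by metis
  then have pos: "(cmod a)\<^sup>2 * (cmod b)\<^sup>2 * (cmod c)\<^sup>2 > 0"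
    by simp
  have "of_real ((cmod a)\<^sup>2 * (cmod b)\<^sup>2 * (cmod c)\<^sup>2) = (a * cnj a) * (b * cnj b) * (c * cnj c)"
    by (simp only: of_real_mult complex_norm_square)
  then have "herm_triple (cscale a u) (cscale b v) (cscale c w)
      = of_real ((cmod a)\<^sup>2 * (cmod b)\<^sup>2 * (cmod c)\<^sup>2) * herm_triple u v w"
    using assms by (simp add: herm_triple_def B_cscale mult_ac)
  then show ?thesis
    by (simp only: Cart_eq_Arg_herm_triple reps Arg_times_of_real[OF pos])
qed

lemma Cart_is_PU:
  assumes "is_PU m f" and "p \<in> hpoints m \<union> hboundary m" "q \<in> hpoints m \<union> hboundary m"
    "r \<in> hpoints m \<union> hboundary m"
  shows "Cart (f p) (f q) (f r) = Cart p q r"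
proof -
  obtain T where T: "\<And>v. v \<in> vecs m \<Longrightarrow> T v \<in> vecs m"
    "\<And>v w. v \<in> vecs m \<Longrightarrow> w \<in> vecs m \<Longrightarrow> B (T v) (T w) = B v w"
    "\<And>v. v \<in> vecs m \<Longrightarrow> v \<noteq> (\<lambda>_. 0) \<Longrightarrow> f (cline v) = cline (T v)"
    using is_PU_cline[OF assms(1)] by blast
  obtain u v w where u: "u \<in> vecs m" "u \<noteq> (\<lambda>_. 0)" "p = cline u"
    and v: "v \<in> vecs m" "v \<noteq> (\<lambda>_. 0)" "q = cline v"
    and w: "w \<in> vecs m" "w \<noteq> (\<lambda>_. 0)" "r = cline w"
    using hpoints_Un_hboundary_cline assms(2-4) by metis
  have "Cart (f p) (f q) (f r) = Cart (cline (T u)) (cline (T v)) (cline (T w))"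
    using u v w by (simp add: T(3))
  also have "\<dots> = Arg (herm_triple (T u) (T v) (T w))"
    using T(1) u v w by (intro Cart_cline)
  also have "\<dots> = Arg (herm_triple u v w)"
    using u v w by (simp add: T(2) herm_triple_def)
  also have "\<dots> = Cart p q r"
    using u v w by (simp add: Cart_cline)
  finally show ?thesis .
qed

lemma is_PU_hpoints:
  assumes "is_PU m f" "p \<in> hpoints m"
  shows "f p \<in> hpoints m"
proof -
  obtain T where T: "\<And>v. v \<in> vecs m \<Longrightarrow> T v \<in> vecs m"
    "\<And>v w. v \<in> vecs m \<Longrightarrow> w \<in> vecs m \<Longrightarrow> B (T v) (T w) = B v w"
    "\<And>v. v \<in> vecs m \<Longrightarrow> v \<noteq> (\<lambda>_. 0) \<Longrightarrow> f (cline v) = cline (T v)"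
    using is_PU_cline[OF assms(1)] by blast
  obtain v where "v \<in> vecs m" "Re (B v v) > 0" "p = cline v"
    using assms(2) unfolding hpoints_def by blast
  then show ?thesis
    unfolding hpoints_def using T timelike_nonzero by fastforce
qed

lemma representation_hpoints:
  assumes "representation m \<rho>" "p \<in> hpoints m"
  shows "\<rho> g p \<in> hpoints m"
  using assms is_PU_hpoints unfolding representation_def by blast

lemma representation_add_hpoints:
  assumes "representation m \<rho>" "p \<in> hpoints m"
  shows "\<rho> (g + h) p = \<rho> g (\<rho> h p)"
proof -
  obtain v where "v \<in> vecs m" "v \<noteq> (\<lambda>_. 0)" "p = cline v"
    using assms(2) hpoints_Un_hboundary_cline by blast
  then show ?thesis
    using assms(1) unfolding representation_def by blast
qed

theorem mainTheorem6:
  fixes m :: enat and \<rho> :: "'g::topological_group_add \<Rightarrow> cvec set \<Rightarrow> cvec set"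
    and x :: "cvec set"
  assumes "representation m \<rho>"
    and "x \<in> hpoints m"
    and "\<exists>y\<in>hboundary m. \<forall>g. \<rho> g y = y"
  shows "\<exists>\<omega> :: 'g \<Rightarrow> 'g \<Rightarrow> real. alternating \<omega> \<and> G_invariant \<omega> \<and>
           coboundary1 \<omega> = (\<lambda>g1 g2 g3. Cart (\<rho> g1 x) (\<rho> g2 x) (\<rho> g3 x))"
proof -
  obtain y where y: "y \<in> hboundary m" "\<And>g. \<rho> g y = y"
    using assms(3) by blast
  have orbit: "\<rho> g x \<in> hpoints m" for g
    using representation_hpoints[OF assms(1,2)] .
  define \<omega> where "\<omega> g l = Cart (\<rho> g x) (\<rho> l x) y" for g l
  have "alternating \<omega>"
    unfolding alternating_def \<omega>_def using Cart_swap orbit y(1) by blast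
  moreover have "G_invariant \<omega>"
    unfolding G_invariant_def \<omega>_def
  proof (intro allI)
    fix h g l
    have "Cart (\<rho> h (\<rho> g x)) (\<rho> h (\<rho> l x)) (\<rho> h y) = Cart (\<rho> g x) (\<rho> l x) y"
      using assms(1) orbit y(1) unfolding representation_def by (intro Cart_is_PU) auto
    then show "Cart (\<rho> (h + g) x) (\<rho> (h + l) x) y = Cart (\<rho> g x) (\<rho> l x) y"
      using representation_add_hpoints[OF assms(1,2)] y(2) by simp
  qed
  moreover have "coboundary1 \<omega> = (\<lambda>g1 g2 g3. Cart (\<rho> g1 x) (\<rho> g2 x) (\<rho> g3 x))"
    unfolding coboundary1_def \<omega>_def using Cart_cocycle orbit y(1) by blast
  ultimately show ?thesis
    by blast
qed

end
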